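(* Let $a\in\mathbb C$ and $n\ge 0$. Then $\{(x-a)^T : T\in\mathbb P_n\}$ is a $\mathbb C$-basis of $\mathbb C\{x\}_{\le n}$. Moreover, for every $f\in\mathbb C\{x\}_{\le n}$ and every $T\in\mathbb P_n$, the coefficient of $(x-a)^T$ in the expansion of $f$ with respect to this basis is $$\langle f,(x-a)^T\rangle=\sum_{U\in\mathbb P_n}\langle f,x^U\rangle\,(U/T)\,a^{\deg(U)-\deg(T)}.$$
   Context: Let $\mathbb P$ denote the set of finite planar reduced rooted trees (rooted trees in which the children of each vertex are linearly ordered and no vertex has exactly one child), including the empty tree $\mathbf 1$ and the one-vertex tree $|$. For $T\in\mathbb P$, $\deg(T)$ is the number of leaves ($\deg\mathbf 1=0$, $\deg|=1$) and $L(T)$ is its set of leaves; $\mathbb P_n=\{T\in\mathbb P:\deg T\le n\}$. The algebra $\mathbb C\{x\}_{\mathbb P}$ of planar polynomials is the $\mathbb C$-vector space with basis $\{x^T:T\in\mathbb P\}$, $x^{\mathbf 1}=1$, $x^{|}=x$, equipped for each $k\ge2$ with the $k$-linear operation $\omega_k$ given on basis elements by $\omega_k(x^{T_1},\dots,x^{T_k})=x^T$, where $T$ is obtained by attaching the nonempty $T_i$ (in this order) as the subtrees of the children of a new root (if exactly one $T_i$ is nonempty, $T$ is that $T_i$; if all are empty, $T=\mathbf 1$). The product is $f\cdot g=\omega_2(f,g)$. Each $x^T$ arises from $x$ by iterating these operations along the tree $T$; for $y\in\mathbb C\{x\}_{\mathbb P}$, $y^T$ denotes the result of the same iteration starting from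 $y$ (with $y^{\mathbf 1}=1$), in particular $(x-a)^T$ for $a\in\mathbb C$. $\mathbb C\{x\}_{\le n}$ is the span of $\{x^T:T\in\mathbb P_n\}$, and $\langle f,x^U\rangle$ is the coefficient of $x^U$ in $f$. For $S\in\mathbb P$ and $I\subseteq L(S)$, the contraction $S|I\in\mathbb P$ is obtained from the subtree of $S$ consisting of all vertices on paths from the root to leaves in $I$ (with induced planar order) by suppressing every vertex having exactly one child; $S|\emptyset=\mathbf 1$ and $S|I=|$ if $\#I=1$. The planar binomial coefficient is $(S/T)=\#\{I\subseteq L(S): S|I=T\}$ (so it is $0$ unless $\deg T\le \deg S$). *)

theory Defs
  imports Complex_Main
begin

text \<open>Planar rooted trees. PEmp is the empty tree 1, PLf the one-vertex tree |,
  PNd ts a root whose children carry the subtrees ts (in order).\<close>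
datatype ptree = PEmp | PLf | PNd "ptree list"

fun red_ne :: "ptree \<Rightarrow> bool" where
  "red_ne PEmp = False"
| "red_ne PLf = True"
| "red_ne (PNd ts) = (2 \<le> length ts \<and> (\<forall>t\<in>set ts. red_ne t))"

definition PP :: "ptree set" where
  "PP = {T. T = PEmp \<or> red_ne T}"

fun deg :: "ptree \<Rightarrow> nat" where
  "deg PEmp = 0"
| "deg PLf = 1"
| "deg (PNd ts) = sum_list (map deg ts)"

definition Pn :: "nat \<Rightarrow> ptree set" where
  "Pn n = {T \<in> PP. deg T \<le> n}"

text \<open>Leaves, as paths (lists of child indices) from the root.\<close>
function (sequential) leaves :: "ptree \<Rightarrow> nat list set" where
  "leaves PEmp = {}"
| "leaves PLf = {[]}"
| "leaves (PNd ts) = (\<Union>(i, t)\<in>set (zip [0..<length ts] ts). (\<lambda>p. i # p) ` leaves t)"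
  by pat_completeness auto
termination
  by (relation "measure size") (auto dest!: set_zip_rightD simp: le_imp_less_Suc size_list_estimation')

definition graft :: "ptree list \<Rightarrow> ptree" where
  "graft Ts = (let Ns = filter (\<lambda>t. t \<noteq> PEmp) Ts in
     if Ns = [] then PEmp else if length Ns = 1 then hd Ns else PNd Ns)"

function (sequential) contr :: "ptree \<Rightarrow> nat list set \<Rightarrow> ptree" where
  "contr PEmp I = PEmp"
| "contr PLf I = (if [] \<in> I then PLf else PEmp)"
| "contr (PNd ts) I = graft (map (\<lambda>(i, t). contr t {p. i # p \<in> I}) (zip [0..<length ts] ts))"
  by pat_completeness auto
termination
  by (relation "measure (size \<circ> fst)") (auto dest!: set_zip_rightD simp: le_imp_less_Suc size_list_estimation')

definition pbinom :: "ptree \<Rightarrow> ptree \<Rightarrow> nat" where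
  "pbinom S T = card {I. I \<subseteq> leaves S \<and> contr S I = T}"

text \<open>Planar polynomials are represented by their coefficient functions
  (f T = coefficient of x^T), supported on finitely many trees of PP.\<close>
type_synonym ppoly = "ptree \<Rightarrow> complex"

definition psupp :: "ppoly \<Rightarrow> ptree set" where
  "psupp f = {T. f T \<noteq> 0}"

definition mono :: "ptree \<Rightarrow> ppoly" where
  "mono T = (\<lambda>S. if S = T then 1 else 0)"

text \<open>Multilinear extension of omega_k (k = length fs).\<close>
definition omega :: "ppoly list \<Rightarrow> ppoly" where
  "omega fs = (\<lambda>S. \<Sum>Ts\<in>listset (map psupp fs).
      if graft Ts = S then prod_list (map2 (\<lambda>f T. f T) fs Ts) else 0)"

fun ppow :: "ppoly \<Rightarrow> ptree \<Rightarrow> ppoly" where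
  "ppow y PEmp = mono PEmp"
| "ppow y PLf = y"
| "ppow y (PNd ts) = omega (map (ppow y) ts)"

definition xminus :: "complex \<Rightarrow> ppoly" where
  "xminus a = (\<lambda>S. if S = PLf then 1 else if S = PEmp then - a else 0)"

definition Cle :: "nat \<Rightarrow> ppoly set" where
  "Cle n = {f. \<forall>T. f T \<noteq> 0 \<longrightarrow> T \<in> Pn n}"

end

theory Submission
  imports Defs
begin

text \<open>
  Writing x = (x - a) + a and expanding the monomial x^U multilinearly along the tree U gives a
  planar binomial theorem: for every p and every constant b,
  (p + b)^U = \<Sum> I \<subseteq> L(U). b^(deg U - #I) p^(U|I),
  because choosing the summand p exactly at the leaves in I and the constant b at all other leaves
  grafts the chosen factors into the contraction U|I. With p = x - a and b = a this expands every
  x^U, hence every f of degree at most n, in the family (x - a)^T with the stated coefficients.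
  With p = x and b = -a it shows that (x - a)^T is x^T plus monomials with fewer leaves, so the
  family is unitriangular with respect to the number of leaves and therefore independent.
\<close>

section \<open>Unitriangular systems\<close>

lemma unitriangular_independent:
  fixes M :: "'a \<Rightarrow> 'a \<Rightarrow> 'b::semiring_1" and w :: "'a \<Rightarrow> nat"
  assumes "finite D"
    and triangular: "\<And>T S. T \<in> D \<Longrightarrow> S \<in> D \<Longrightarrow> w T \<le> w S \<Longrightarrow> M T S = (if S = T then 1 else 0)"
    and vanish: "\<And>S. (\<Sum>T\<in>D. c T * M T S) = 0"
    and "T \<in> D"
  shows "c T = 0"
proof (rule ccontr)
  assume "c T \<noteq> 0"
  define D' where "D' = {T\<in>D. c T \<noteq> 0}"
  have "finite D'" "D' \<noteq> {}"
    using assms(1,4) \<open>c T \<noteq> 0\<close> by (auto simp: D'_def)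
  then have "Max (w ` D') \<in> w ` D'"
    by (intro Max_in) auto
  then obtain T0 where T0: "T0 \<in> D'" "w T0 = Max (w ` D')"
    by auto
  have "c T' * M T' T0 = (if T' = T0 then c T0 else 0)" if "T' \<in> D" for T'
  proof (cases "c T' = 0")
    case False
    with that have "w T' \<le> w T0" using T0 \<open>finite D'\<close> by (simp add: D'_def)
    with that T0 show ?thesis by (simp add: triangular D'_def)
  qed (use T0 triangular in \<open>auto simp: D'_def\<close>)
  then have "(\<Sum>T'\<in>D. c T' * M T' T0) = c T0"
    using T0 assms(1) by (simp add: D'_def cong: sum.cong)
  with vanish T0 show False by (simp add: D'_def)
qed

section \<open>The multilinear pairing behind omega\<close>

lemma listset_Cons_image: "listset (A # As) = (\<lambda>(x, xs). x # xs) ` (A \<times> listset As)"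
  by (auto simp: set_Cons_def)

lemma finite_listset: "(\<And>A. A \<in> set As \<Longrightarrow> finite A) \<Longrightarrow> finite (listset As)"
  by (induction As) (simp_all add: listset_Cons_image del: listset.simps(2))

text \<open>The pairing of f1 \<otimes> ... \<otimes> fk with a function g of k-tuples of trees.\<close>

definition tensor_pair :: "ppoly list \<Rightarrow> (ptree list \<Rightarrow> complex) \<Rightarrow> complex" where
  "tensor_pair fs g = (\<Sum>Ts\<in>listset (map psupp fs). g Ts * prod_list (map2 (\<lambda>f T. f T) fs Ts))"

lemma tensor_pair_Nil [simp]: "tensor_pair [] g = g []"
  by (simp add: tensor_pair_def)

lemma tensor_pair_Cons:
  "tensor_pair (f # fs) g = (\<Sum>x\<in>psupp f. f x * tensor_pair fs (\<lambda>xs. g (x # xs)))"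
proof -
  have inj: "inj_on (\<lambda>(x, xs). x # xs) (psupp f \<times> listset (map psupp fs))"
    by (auto simp: inj_on_def)
  have "tensor_pair (f # fs) g = (\<Sum>(x, xs)\<in>psupp f \<times> listset (map psupp fs).
      g (x # xs) * (f x * prod_list (map2 (\<lambda>f T. f T) fs xs)))"
    unfolding tensor_pair_def list.map listset_Cons_image
    by (subst sum.reindex[OF inj]) (simp add: comp_def case_prod_unfold)
  then show ?thesis
    by (simp add: tensor_pair_def sum.cartesian_product[symmetric] sum_distrib_left mult_ac)
qed

lemma tensor_pair_Cons_superset:
  "finite A \<Longrightarrow> psupp f \<subseteq> A \<Longrightarrow>
    tensor_pair (f # fs) g = (\<Sum>x\<in>A. f x * tensor_pair fs (\<lambda>xs. g (x # xs)))"
  unfolding tensor_pair_Cons by (rule sum.mono_neutral_left) (auto simp: psupp_def)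

lemma tensor_pair_Cons_lincomb:
  assumes "finite J" and "\<And>j. j \<in> J \<Longrightarrow> finite (psupp (F j))"
    and f: "\<And>x. f x = (\<Sum>j\<in>J. c j * F j x)"
  shows "tensor_pair (f # fs) g = (\<Sum>j\<in>J. c j * tensor_pair (F j # fs) g)"
proof -
  define A where "A = (\<Union>j\<in>J. psupp (F j))"
  define R where "R x = tensor_pair fs (\<lambda>xs. g (x # xs))" for x
  have A: "finite A" "psupp f \<subseteq> A" "\<And>j. j \<in> J \<Longrightarrow> psupp (F j) \<subseteq> A"
    using assms by (auto simp: A_def psupp_def intro: ccontr)
  have "tensor_pair (f # fs) g = (\<Sum>x\<in>A. (\<Sum>j\<in>J. c j * F j x) * R x)"
    by (simp add: tensor_pair_Cons_superset[OF A(1,2)] R_def f)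
  also have "\<dots> = (\<Sum>j\<in>J. c j * (\<Sum>x\<in>A. F j x * R x))"
    by (simp add: sum_distrib_left sum_distrib_right sum.swap[of _ A] mult_ac)
  also have "\<dots> = (\<Sum>j\<in>J. c j * tensor_pair (F j # fs) g)"
    by (intro sum.cong refl) (simp add: tensor_pair_Cons_superset[OF A(1,3)] R_def)
  finally show ?thesis .
qed

lemma tensor_pair_Cons_tail_lincomb:
  assumes "\<And>g. tensor_pair fs g = (\<Sum>j\<in>J. c j * tensor_pair (Fs j) g)"
  shows "tensor_pair (f # fs) g = (\<Sum>j\<in>J. c j * tensor_pair (f # Fs j) g)"
  by (simp add: tensor_pair_Cons assms sum_distrib_left sum.swap[of _ "psupp f"] mult_ac)

lemma tensor_pair_Cons_mono_PEmp:
  "tensor_pair (mono PEmp # fs) g = tensor_pair fs (\<lambda>xs. g (PEmp # xs))"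
  by (simp add: tensor_pair_Cons psupp_def mono_def)

lemma tensor_pair_map_mono: "tensor_pair (map mono Us) g = g Us"
  by (induction Us arbitrary: g) (simp_all add: tensor_pair_Cons psupp_def mono_def)

lemma omega_eq_tensor_pair: "omega fs S = tensor_pair fs (\<lambda>Ts. if graft Ts = S then 1 else 0)"
  unfolding omega_def tensor_pair_def by (rule sum.cong) auto

lemma psupp_omega: "psupp (omega fs) \<subseteq> graft ` listset (map psupp fs)"
  by (force simp: psupp_def omega_def intro: sum.neutral)

lemma finite_psupp_omega: "(\<And>f. f \<in> set fs \<Longrightarrow> finite (psupp f)) \<Longrightarrow> finite (psupp (omega fs))"
  by (rule finite_subset[OF psupp_omega]) (auto intro!: finite_imageI finite_listset)

lemma psupp_mono [simp]: "psupp (mono T) = {T}"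
  by (auto simp: psupp_def mono_def)

lemma finite_psupp_ppow: "finite (psupp p) \<Longrightarrow> finite (psupp (ppow p t))"
  by (induction t) (auto intro!: finite_psupp_omega)

lemma graft_Nil [simp]: "graft [] = PEmp"
  by (simp add: graft_def)

lemma graft_singleton [simp]: "graft [t] = t"
  by (simp add: graft_def)

lemma graft_filter_PEmp: "graft [t\<leftarrow>Ts. t \<noteq> PEmp] = graft Ts"
  by (simp add: graft_def)

lemma graft_cases:
  obtains "[t\<leftarrow>Ts. t \<noteq> PEmp] = []" "graft Ts = PEmp"
  | t where "[t\<leftarrow>Ts. t \<noteq> PEmp] = [t]" "graft Ts = t"
  | "2 \<le> length [t\<leftarrow>Ts. t \<noteq> PEmp]" "graft Ts = PNd [t\<leftarrow>Ts. t \<noteq> PEmp]"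
proof (cases "[t\<leftarrow>Ts. t \<noteq> PEmp]")
  case (Cons t ts)
  then show ?thesis using that by (cases ts) (auto simp: graft_def)
qed (use that in \<open>simp add: graft_def\<close>)

lemma graft_reduced:
  assumes "2 \<le> length ts" "\<forall>t\<in>set ts. red_ne t"
  shows "graft ts = PNd ts"
proof -
  have "[t\<leftarrow>ts. t \<noteq> PEmp] = ts"
    using assms(2) by (auto simp: filter_id_conv)
  with assms(1) show ?thesis by (cases ts) (auto simp: graft_def Let_def)
qed

lemma graft_in_PP:
  assumes "set Ts \<subseteq> PP"
  shows "graft Ts \<in> PP"
proof -
  have "\<forall>t\<in>set [t\<leftarrow>Ts. t \<noteq> PEmp]. red_ne t"
    using assms by (auto simp: PP_def)
  then show ?thesis
    by (cases rule: graft_cases[of Ts]) (auto simp: PP_def)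
qed

lemma deg_graft: "deg (graft Ts) = sum_list (map deg Ts)"
proof -
  have "sum_list (map deg [t\<leftarrow>Ts. t \<noteq> PEmp]) = sum_list (map deg Ts)"
    by (induction Ts) auto
  then show ?thesis
    by (cases rule: graft_cases[of Ts]) auto
qed

section \<open>Leaves as paths\<close>

definition shift_path :: "nat list \<Rightarrow> nat list" where
  "shift_path p = Suc (hd p) # tl p"

definition child_paths :: "nat \<Rightarrow> nat list set \<Rightarrow> nat list set" where
  "child_paths i I = {p. i # p \<in> I}"

definition tail_paths :: "nat list set \<Rightarrow> nat list set" where
  "tail_paths I = {p. p \<noteq> [] \<and> shift_path p \<in> I}"

text \<open>A path into PNd (t # ts) either enters the first child t, with head index 0, or is a path
  into PNd ts with its head index shifted by one.\<close>

definition join_paths :: "nat list set \<Rightarrow> nat list set \<Rightarrow> nat list set" where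
  "join_paths J J' = Cons 0 ` J \<union> shift_path ` J'"

lemma shift_path_Cons [simp]: "shift_path (i # p) = Suc i # p"
  by (simp add: shift_path_def)

lemma inj_on_shift_path: "inj_on shift_path {p. p \<noteq> []}"
  by (auto simp: inj_on_def shift_path_def intro: list.expand)

lemma Nil_notin_join_paths [simp]: "[] \<notin> join_paths J J'"
  by (auto simp: join_paths_def shift_path_def)

lemma child_paths_mono: "I \<subseteq> I' \<Longrightarrow> child_paths i I \<subseteq> child_paths i I'"
  by (auto simp: child_paths_def)

lemma tail_paths_mono: "I \<subseteq> I' \<Longrightarrow> tail_paths I \<subseteq> tail_paths I'"
  by (auto simp: tail_paths_def)

lemma child_paths_tail_paths [simp]: "child_paths i (tail_paths I) = child_paths (Suc i) I"
  by (simp add: child_paths_def tail_paths_def)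

lemma child_paths_join_paths [simp]: "child_paths 0 (join_paths J J') = J"
  by (auto simp: child_paths_def join_paths_def shift_path_def)

lemma tail_paths_join_paths [simp]:
  assumes "[] \<notin> J'"
  shows "tail_paths (join_paths J J') = J'"
proof (intro equalityI subsetI)
  fix p assume "p \<in> tail_paths (join_paths J J')"
  then obtain q where "p \<noteq> []" "q \<in> J'" "shift_path p = shift_path q"
    by (auto simp: tail_paths_def join_paths_def shift_path_def)
  with assms show "p \<in> J'"
    using inj_onD[OF inj_on_shift_path, of p q] by auto
qed (use assms in \<open>auto simp: tail_paths_def join_paths_def\<close>)

lemma join_paths_split:
  assumes "[] \<notin> I"
  shows "join_paths (child_paths 0 I) (tail_paths I) = I"
proof (intro equalityI subsetI)
  fix p assume "p \<in> I"
  with assms obtain i q where p: "p = i # q" by (cases p) auto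
  show "p \<in> join_paths (child_paths 0 I) (tail_paths I)"
  proof (cases i)
    case 0
    with p \<open>p \<in> I\<close> show ?thesis by (simp add: join_paths_def child_paths_def)
  next
    case (Suc j)
    with p \<open>p \<in> I\<close> have "j # q \<in> tail_paths I" "p = shift_path (j # q)"
      by (simp_all add: tail_paths_def)
    then show ?thesis unfolding join_paths_def by blast
  qed
qed (auto simp: join_paths_def child_paths_def tail_paths_def)

lemma card_join_paths:
  assumes "finite J" "finite J'" "[] \<notin> J'"
  shows "card (join_paths J J') = card J + card J'"
proof -
  have "inj_on shift_path J'"
    using assms(3) by (auto intro: inj_on_subset[OF inj_on_shift_path])
  moreover have "Cons 0 ` J \<inter> shift_path ` J' = {}"
    by (auto simp: shift_path_def)
  ultimately show ?thesis
    using assms by (simp add: join_paths_def card_Un_disjoint card_image)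
qed

lemma bij_betw_join_paths:
  assumes "[] \<notin> B"
  shows "bij_betw (\<lambda>(J, J'). join_paths J J') (Pow A \<times> Pow B) (Pow (join_paths A B))"
proof (rule bij_betw_byWitness[where f' = "\<lambda>I. (child_paths 0 I, tail_paths I)"])
  have "tail_paths (join_paths J J') = J'" if "J' \<subseteq> B" for J J'
    using that assms tail_paths_join_paths by blast
  then show "\<forall>z\<in>Pow A \<times> Pow B.
      (\<lambda>I. (child_paths 0 I, tail_paths I)) ((\<lambda>(J, J'). join_paths J J') z) = z"
    by auto
  show "\<forall>I\<in>Pow (join_paths A B). (\<lambda>(J, J'). join_paths J J') (child_paths 0 I, tail_paths I) = I"
    using join_paths_split by (metis Nil_notin_join_paths PowD case_prod_conv subsetD)
  show "(\<lambda>(J, J'). join_paths J J') ` (Pow A \<times> Pow B) \<subseteq> Pow (join_paths A B)"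
    by (auto simp: join_paths_def)
  show "(\<lambda>I. (child_paths 0 I, tail_paths I)) ` Pow (join_paths A B) \<subseteq> Pow A \<times> Pow B"
    using child_paths_mono[of _ "join_paths A B" 0] tail_paths_mono[of _ "join_paths A B"] assms
    by auto
qed

lemma zip_upt_Cons:
  "zip [0..<length (t # ts)] (t # ts) = (0, t) # map (\<lambda>(i, s). (Suc i, s)) (zip [0..<length ts] ts)"
proof -
  have "[0..<length (t # ts)] = 0 # map Suc [0..<length ts]"
    by (simp add: map_Suc_upt upt_conv_Cons del: upt_Suc)
  then show ?thesis by (simp add: zip_map1)
qed

lemma leaves_PNd_Nil [simp]: "leaves (PNd []) = {}"
  by simp

lemma leaves_PNd_Cons: "leaves (PNd (t # ts)) = join_paths (leaves t) (leaves (PNd ts))"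
  by (simp only: leaves.simps zip_upt_Cons)
    (auto simp: join_paths_def image_UN image_image case_prod_unfold)

declare leaves.simps(3) [simp del]

lemma Nil_notin_leaves_PNd [simp]: "[] \<notin> leaves (PNd ts)"
  by (cases ts) (simp_all add: leaves_PNd_Cons)

lemma ptree_Cons_induct [case_names PEmp PLf PNd_Nil PNd_Cons]:
  assumes "P PEmp" and "P PLf" and "P (PNd [])"
    and "\<And>t ts. P t \<Longrightarrow> P (PNd ts) \<Longrightarrow> P (PNd (t # ts))"
  shows "P T"
proof (induction T rule: measure_induct_rule[of size])
  case (less T)
  show ?case
  proof (cases T)
    case (PNd ts)
    with less show ?thesis by (cases ts) (auto intro: assms)
  qed (use assms in auto)
qed

lemma finite_leaves [simp]: "finite (leaves T)"
  by (induction T rule: ptree_Cons_induct) (simp_all add: leaves_PNd_Cons join_paths_def)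

lemma card_leaves [simp]: "card (leaves T) = deg T"
  by (induction T rule: ptree_Cons_induct) (simp_all add: leaves_PNd_Cons card_join_paths)

lemma card_le_deg: "I \<subseteq> leaves T \<Longrightarrow> card I \<le> deg T"
  using card_mono[OF finite_leaves] by fastforce

lemma eq_leaves_if_deg_le_card: "I \<subseteq> leaves T \<Longrightarrow> deg T \<le> card I \<Longrightarrow> I = leaves T"
  using card_subset_eq[OF finite_leaves] card_le_deg card_leaves by (metis le_antisym)

lemma deg_diff_card_join_paths:
  assumes "J \<subseteq> leaves t" "J' \<subseteq> leaves (PNd ts)"
  shows "deg (PNd (t # ts)) - card (join_paths J J') = (deg t - card J) + (deg (PNd ts) - card J')"
proof -
  have "card (join_paths J J') = card J + card J'"
    using assms by (intro card_join_paths) (auto dest: finite_subset)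
  with card_le_deg[OF assms(1)] card_le_deg[OF assms(2)] show ?thesis
    by simp
qed

section \<open>Contraction\<close>

definition contr_children :: "ptree list \<Rightarrow> nat list set \<Rightarrow> ptree list" where
  "contr_children ts I = map (\<lambda>(i, t). contr t (child_paths i I)) (zip [0..<length ts] ts)"

lemma contr_PNd: "contr (PNd ts) I = graft (contr_children ts I)"
  by (simp add: contr_children_def child_paths_def)

declare contr.simps(3) [simp del]

lemma contr_children_Nil [simp]: "contr_children [] I = []"
  by (simp add: contr_children_def)

lemma contr_children_Cons:
  "contr_children (t # ts) I = contr t (child_paths 0 I) # contr_children ts (tail_paths I)"
  unfolding contr_children_def zip_upt_Cons by (simp add: case_prod_unfold)

lemma contr_children_join_paths:
  "[] \<notin> J' \<Longrightarrow> contr_children (t # ts) (join_paths J J') = contr t J # contr_children ts J'"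
  by (simp add: contr_children_Cons)

lemma contr_in_PP: "contr T I \<in> PP"
proof (induction T arbitrary: I)
  case (PNd ts)
  have "set (contr_children ts I) \<subseteq> PP"
    using PNd.IH by (auto simp: contr_children_def dest: set_zip_rightD)
  then show ?case by (simp add: contr_PNd graft_in_PP)
qed (simp_all add: PP_def)

lemma deg_contr: "I \<subseteq> leaves T \<Longrightarrow> deg (contr T I) = card I"
proof (induction T arbitrary: I rule: ptree_Cons_induct)
  case PLf
  then show ?case by (auto simp: subset_singleton_iff)
next
  case (PNd_Cons t ts)
  have sub: "child_paths 0 I \<subseteq> leaves t" "tail_paths I \<subseteq> leaves (PNd ts)"
    using child_paths_mono[OF PNd_Cons.prems, of 0] tail_paths_mono[OF PNd_Cons.prems]
    by (simp_all add: leaves_PNd_Cons)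
  have "I = join_paths (child_paths 0 I) (tail_paths I)"
    using PNd_Cons.prems join_paths_split by (metis Nil_notin_leaves_PNd subsetD)
  then have "card I = card (child_paths 0 I) + card (tail_paths I)"
    using sub by (metis card_join_paths finite_leaves finite_subset Nil_notin_leaves_PNd subsetD)
  then show ?case
    using PNd_Cons.IH(1)[OF sub(1)] PNd_Cons.IH(2)[OF sub(2)]
    by (simp add: contr_PNd contr_children_Cons deg_graft)
qed (simp_all add: contr_PNd)

lemma contr_children_leaves:
  "contr_children ts (leaves (PNd ts)) = map (\<lambda>t. contr t (leaves t)) ts"
  by (induction ts) (simp_all add: contr_children_Cons leaves_PNd_Cons)

lemma contr_leaves: "T \<in> PP \<Longrightarrow> contr T (leaves T) = T"
proof (induction T)
  case (PNd ts)
  then have "2 \<le> length ts" "\<forall>t\<in>set ts. red_ne t" "map (\<lambda>t. contr t (leaves t)) ts = ts"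
    by (auto simp: PP_def intro: map_idI)
  then show ?case by (simp add: contr_PNd contr_children_leaves graft_reduced)
qed simp_all

lemma deg_pos: "red_ne T \<Longrightarrow> 0 < deg T"
proof (induction T)
  case (PNd ts)
  then obtain t where "t \<in> set ts" "0 < deg t" by (cases ts) auto
  then show ?case using member_le_sum_list[of "deg t" "map deg ts"] by simp
qed simp_all

lemma length_le_deg: "red_ne (PNd ts) \<Longrightarrow> length ts \<le> deg (PNd ts)"
  using sum_list_mono[of ts "\<lambda>_. 1" deg] deg_pos by (auto simp: sum_list_triv Suc_leI)

lemma deg_child_less:
  assumes "red_ne (PNd ts)" "t \<in> set ts"
  shows "deg t < deg (PNd ts)"
proof -
  obtain t' where "t' \<in> set (remove1 t ts)"
    using assms by (cases "remove1 t ts") (auto simp: length_remove1 dest: arg_cong[of _ _ length])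
  moreover have "0 < deg t'"
    using \<open>t' \<in> set (remove1 t ts)\<close> assms(1) deg_pos set_remove1_subset by fastforce
  ultimately have "0 < sum_list (map deg (remove1 t ts))"
    using member_le_sum_list[of "deg t'" "map deg (remove1 t ts)"] by simp
  then show ?thesis
    using sum_list_map_remove1[OF assms(2), of deg] by simp
qed

lemma finite_Pn: "finite (Pn n)"
proof (induction n)
  case 0
  have "Pn 0 \<subseteq> {PEmp}"
    using deg_pos by (fastforce simp: Pn_def PP_def)
  then show ?case by (rule finite_subset) simp
next
  case (Suc n)
  have "Pn (Suc n) \<subseteq> {PEmp, PLf} \<union> PNd ` {ts. set ts \<subseteq> Pn n \<and> length ts \<le> Suc n}"
  proof
    fix T assume T: "T \<in> Pn (Suc n)"
    show "T \<in> {PEmp, PLf} \<union> PNd ` {ts. set ts \<subseteq> Pn n \<and> length ts \<le> Suc n}"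
    proof (cases T)
      case (PNd ts)
      with T have "red_ne (PNd ts)" "deg (PNd ts) \<le> Suc n"
        by (auto simp: Pn_def PP_def)
      then have "set ts \<subseteq> Pn n" "length ts \<le> Suc n"
        using deg_child_less length_le_deg by (fastforce simp: Pn_def PP_def)+
      with PNd show ?thesis by blast
    qed simp_all
  qed
  then show ?case
    by (rule finite_subset) (simp add: finite_lists_length_le[OF Suc.IH])
qed

section \<open>The planar binomial theorem\<close>

lemma omega_Nil: "omega [] = mono PEmp"
  by (simp add: fun_eq_iff omega_eq_tensor_pair mono_def graft_def)

lemma omega_singleton: "finite (psupp f) \<Longrightarrow> omega [f] = f"
proof
  fix S assume "finite (psupp f)"
  have "omega [f] S = (\<Sum>x\<in>psupp f. if x = S then f x else 0)"
    unfolding omega_eq_tensor_pair tensor_pair_Cons by (intro sum.cong) auto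
  also have "\<dots> = f S"
    using \<open>finite (psupp f)\<close> by (simp add: sum.delta psupp_def)
  finally show "omega [f] S = f S" .
qed

lemma omega_map_mono: "omega (map mono Ts) = mono (graft Ts)"
  by (auto simp: fun_eq_iff omega_eq_tensor_pair tensor_pair_map_mono mono_def)

lemma tensor_pair_filter_PEmp:
  assumes "F PEmp = mono PEmp"
  shows "tensor_pair (map F Ls) (\<lambda>Ts. h [t\<leftarrow>Ts. t \<noteq> PEmp])
       = tensor_pair (map F [t\<leftarrow>Ls. t \<noteq> PEmp]) (\<lambda>Ts. h [t\<leftarrow>Ts. t \<noteq> PEmp])"
proof (induction Ls arbitrary: h)
  case (Cons L Ls)
  have "tensor_pair (map F Ls) (\<lambda>xs. h [t\<leftarrow>x # xs. t \<noteq> PEmp])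
      = tensor_pair (map F [t\<leftarrow>Ls. t \<noteq> PEmp]) (\<lambda>xs. h [t\<leftarrow>x # xs. t \<noteq> PEmp])" for x
    using Cons.IH[of "\<lambda>Ns. h (if x \<noteq> PEmp then x # Ns else Ns)"] by simp
  then show ?case
  proof (cases "L = PEmp")
    case True
    then show ?thesis using Cons.IH[of h] by (simp add: assms tensor_pair_Cons_mono_PEmp)
  qed (simp add: tensor_pair_Cons)
qed simp

lemma omega_filter_PEmp:
  "F PEmp = mono PEmp \<Longrightarrow> omega (map F Ls) = omega (map F [t\<leftarrow>Ls. t \<noteq> PEmp])"
  using tensor_pair_filter_PEmp[of F Ls "\<lambda>Ns. if graft Ns = S then 1 else 0" for S]
  by (simp add: fun_eq_iff omega_eq_tensor_pair graft_filter_PEmp)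

lemma ppow_graft:
  assumes "finite (psupp p)"
  shows "ppow p (graft Ls) = omega (map (ppow p) Ls)"
proof -
  have "omega (map (ppow p) Ls) = omega (map (ppow p) [t\<leftarrow>Ls. t \<noteq> PEmp])"
    by (rule omega_filter_PEmp) simp
  then show ?thesis
    using omega_singleton[OF finite_psupp_ppow[OF assms]]
    by (cases rule: graft_cases[of Ls]) (simp_all add: omega_Nil)
qed

lemma tensor_pair_ppow_forest:
  assumes p: "finite (psupp p)"
    and trees: "\<And>t S. t \<in> set ts \<Longrightarrow>
      ppow y t S = (\<Sum>I\<in>Pow (leaves t). b ^ (deg t - card I) * ppow p (contr t I) S)"
  shows "tensor_pair (map (ppow y) ts) g = (\<Sum>I\<in>Pow (leaves (PNd ts)).
      b ^ (deg (PNd ts) - card I) * tensor_pair (map (ppow p) (contr_children ts I)) g)"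
  using trees
proof (induction ts arbitrary: g)
  case (Cons t ts)
  let ?c = "\<lambda>t I. b ^ (deg t - card I)"
  have IH: "tensor_pair (map (ppow y) ts) g = (\<Sum>J'\<in>Pow (leaves (PNd ts)).
      ?c (PNd ts) J' * tensor_pair (map (ppow p) (contr_children ts J')) g)" for g
    using Cons by simp
  have "tensor_pair (map (ppow y) (t # ts)) g
      = (\<Sum>J\<in>Pow (leaves t). ?c t J * tensor_pair (ppow p (contr t J) # map (ppow y) ts) g)"
    unfolding list.map
    by (rule tensor_pair_Cons_lincomb) (simp_all add: Cons.prems finite_psupp_ppow[OF p])
  also have "\<dots> = (\<Sum>J\<in>Pow (leaves t). \<Sum>J'\<in>Pow (leaves (PNd ts)). ?c t J * ?c (PNd ts) J'
      * tensor_pair (ppow p (contr t J) # map (ppow p) (contr_children ts J')) g)"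
    by (simp add: tensor_pair_Cons_tail_lincomb[OF IH] sum_distrib_left mult_ac)
  also have "\<dots> = (\<Sum>(J, J')\<in>Pow (leaves t) \<times> Pow (leaves (PNd ts)).
      ?c (PNd (t # ts)) (join_paths J J')
      * tensor_pair (map (ppow p) (contr_children (t # ts) (join_paths J J'))) g)"
    unfolding sum.cartesian_product
    by (intro sum.cong refl)
      (auto simp del: deg.simps simp: deg_diff_card_join_paths power_add contr_children_join_paths
        contra_subsetD[OF _ Nil_notin_leaves_PNd] mult_ac)
  also have "\<dots> = (\<Sum>I\<in>Pow (leaves (PNd (t # ts))).
      ?c (PNd (t # ts)) I * tensor_pair (map (ppow p) (contr_children (t # ts) I)) g)"
    unfolding leaves_PNd_Cons
    using sum.reindex_bij_betw[OF bij_betw_join_paths[OF Nil_notin_leaves_PNd],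
        of "\<lambda>I. ?c (PNd (t # ts)) I * tensor_pair (map (ppow p) (contr_children (t # ts) I)) g"]
    by (simp add: case_prod_unfold)
  finally show ?case .
qed simp

theorem ppow_add_unit:
  assumes "finite (psupp p)"
  shows "ppow (\<lambda>S. p S + b * mono PEmp S) t S
    = (\<Sum>I\<in>Pow (leaves t). b ^ (deg t - card I) * ppow p (contr t I) S)"
proof (induction t arbitrary: S)
  case PLf
  have "Pow {[] :: nat list} = {{}, {[]}}" by auto
  then show ?case by (simp add: mono_def)
next
  case (PNd ts)
  have "ppow (\<lambda>S. p S + b * mono PEmp S) (PNd ts) S = (\<Sum>I\<in>Pow (leaves (PNd ts)).
      b ^ (deg (PNd ts) - card I)
      * tensor_pair (map (ppow p) (contr_children ts I)) (\<lambda>Ts. if graft Ts = S then 1 else 0))"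
    unfolding ppow.simps omega_eq_tensor_pair
    by (rule tensor_pair_ppow_forest[OF assms PNd.IH])
  then show ?case
    by (simp add: contr_PNd ppow_graft[OF assms] omega_eq_tensor_pair)
qed simp

section \<open>Monomials in the variable x - a\<close>

lemma ppow_mono_PLf: "T \<in> PP \<Longrightarrow> ppow (mono PLf) T = mono T"
proof (induction T)
  case (PNd ts)
  then have reduced: "2 \<le> length ts" "\<forall>t\<in>set ts. red_ne t"
    by (auto simp: PP_def)
  with PNd.IH have children: "map (ppow (mono PLf)) ts = map mono ts"
    by (auto simp: PP_def)
  show ?case
    unfolding ppow.simps children by (simp add: omega_map_mono graft_reduced[OF reduced])
qed (simp_all add: mono_def)

lemma xminus_eq: "xminus a = (\<lambda>S. mono PLf S + (- a) * mono PEmp S)"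
  by (auto simp: xminus_def mono_def)

lemma mono_PLf_eq: "mono PLf = (\<lambda>S. xminus a S + a * mono PEmp S)"
  by (auto simp: xminus_def mono_def)

lemma finite_psupp_xminus: "finite (psupp (xminus a))"
  by (rule finite_subset[of _ "{PEmp, PLf}"]) (auto simp: psupp_def xminus_def)

lemma ppow_xminus:
  "T \<in> PP \<Longrightarrow> ppow (xminus a) T S = (\<Sum>I\<in>Pow (leaves T). (- a) ^ (deg T - card I) * mono (contr T I) S)"
  unfolding xminus_eq
  by (subst ppow_add_unit) (simp_all add: ppow_mono_PLf contr_in_PP)

lemma ppow_xminus_top_degree:
  assumes "T \<in> PP" "deg T \<le> deg S"
  shows "ppow (xminus a) T S = mono T S"
proof -
  have "(- a) ^ (deg T - card I) * mono (contr T I) S = (if I = leaves T then mono T S else 0)"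
    if "I \<subseteq> leaves T" for I
  proof (cases "contr T I = S")
    case True
    with that assms have "I = leaves T"
      using deg_contr eq_leaves_if_deg_le_card by metis
    with True show ?thesis using contr_leaves[OF assms(1)] by simp
  next
    case False
    then show ?thesis
      using contr_leaves[OF assms(1)] by (auto simp: mono_def)
  qed
  then have "ppow (xminus a) T S = (\<Sum>I\<in>Pow (leaves T). if I = leaves T then mono T S else 0)"
    unfolding ppow_xminus[OF assms(1)] by (intro sum.cong) auto
  then show ?thesis by simp
qed

lemma ppow_xminus_in_Cle:
  assumes T: "T \<in> Pn n"
  shows "ppow (xminus a) T \<in> Cle n"
proof (unfold Cle_def, intro CollectI allI impI)
  fix S assume nonzero: "ppow (xminus a) T S \<noteq> 0"
  have "\<exists>I\<in>Pow (leaves T). contr T I = S"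
  proof (rule ccontr)
    assume "\<not> ?thesis"
    moreover have "T \<in> PP" using T by (simp add: Pn_def)
    ultimately have "ppow (xminus a) T S = 0"
      unfolding ppow_xminus[OF \<open>T \<in> PP\<close>] by (intro sum.neutral) (auto simp: mono_def)
    with nonzero show False by simp
  qed
  then obtain I where "I \<subseteq> leaves T" "contr T I = S"
    by blast
  with T show "S \<in> Pn n"
    using contr_in_PP[of T I] deg_contr[of I T] card_le_deg[of I T] by (auto simp: Pn_def)
qed

lemma mono_expansion:
  assumes U: "U \<in> Pn n"
  shows "mono U S = (\<Sum>T\<in>Pn n. of_nat (pbinom U T) * a ^ (deg U - deg T) * ppow (xminus a) T S)"
proof -
  define \<phi> where "\<phi> T = a ^ (deg U - deg T) * ppow (xminus a) T S" for T
  have contr_U: "contr U I \<in> Pn n" "deg (contr U I) = card I" if "I \<in> Pow (leaves U)" for I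
    using that U contr_in_PP[of U I] deg_contr[of I U] card_le_deg[of I U] by (auto simp: Pn_def)
  have "mono U S = (\<Sum>I\<in>Pow (leaves U). a ^ (deg U - card I) * ppow (xminus a) (contr U I) S)"
    using U ppow_add_unit[OF finite_psupp_xminus[of a], where b = a and t = U and S = S]
    by (simp add: mono_PLf_eq[symmetric] ppow_mono_PLf Pn_def)
  also have "\<dots> = (\<Sum>I\<in>Pow (leaves U). \<Sum>T\<in>Pn n. if contr U I = T then \<phi> T else 0)"
    by (intro sum.cong refl) (simp add: sum.delta finite_Pn contr_U \<phi>_def)
  also have "\<dots> = (\<Sum>T\<in>Pn n. of_nat (pbinom U T) * \<phi> T)"
    by (subst sum.swap) (simp add: sum.inter_filter[symmetric] pbinom_def conj_commute)
  finally show ?thesis by (simp add: \<phi>_def mult.assoc)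
qed

lemma Cle_expansion:
  assumes "f \<in> Cle n"
  shows "f S = (\<Sum>T\<in>Pn n. (\<Sum>U\<in>Pn n. f U * of_nat (pbinom U T) * a ^ (deg U - deg T))
                       * ppow (xminus a) T S)"
proof -
  have "(\<Sum>U\<in>Pn n. f U * mono U S) = (\<Sum>U\<in>Pn n. if U = S then f S else 0)"
    by (intro sum.cong) (auto simp: mono_def)
  also have "\<dots> = f S"
    using assms finite_Pn by (auto simp: Cle_def)
  finally have "f S = (\<Sum>U\<in>Pn n. f U * mono U S)" ..
  also have "\<dots> = (\<Sum>U\<in>Pn n. \<Sum>T\<in>Pn n.
      f U * of_nat (pbinom U T) * a ^ (deg U - deg T) * ppow (xminus a) T S)"
    by (simp add: mono_expansion[where a = a] sum_distrib_left mult.assoc cong: sum.cong)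
  also have "\<dots> = (\<Sum>T\<in>Pn n. (\<Sum>U\<in>Pn n. f U * of_nat (pbinom U T) * a ^ (deg U - deg T))
                       * ppow (xminus a) T S)"
    by (subst sum.swap) (simp add: sum_distrib_right)
  finally show ?thesis .
qed

theorem proposition2p1:
  fixes a :: complex and n :: nat
  shows "(\<forall>T\<in>Pn n. ppow (xminus a) T \<in> Cle n)
    \<and> (\<forall>c :: ptree \<Rightarrow> complex.
          (\<forall>S. (\<Sum>T\<in>Pn n. c T * ppow (xminus a) T S) = 0) \<longrightarrow> (\<forall>T\<in>Pn n. c T = 0))
    \<and> (\<forall>f\<in>Cle n. \<forall>S. f S =
          (\<Sum>T\<in>Pn n. (\<Sum>U\<in>Pn n. f U * of_nat (pbinom U T) * a ^ (deg U - deg T))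
                       * ppow (xminus a) T S))"
proof (intro conjI ballI allI impI)
  fix T assume "T \<in> Pn n"
  then show "ppow (xminus a) T \<in> Cle n" by (rule ppow_xminus_in_Cle)
next
  fix c :: "ptree \<Rightarrow> complex" and T
  assume "\<forall>S. (\<Sum>T\<in>Pn n. c T * ppow (xminus a) T S) = 0" and "T \<in> Pn n"
  moreover have "ppow (xminus a) T' S = (if S = T' then 1 else 0)"
    if "T' \<in> Pn n" "S \<in> Pn n" "deg T' \<le> deg S" for T' S
    using that by (simp add: ppow_xminus_top_degree Pn_def mono_def)
  ultimately show "c T = 0"
    using unitriangular_independent[OF finite_Pn, where w = deg] by blast
next
  fix f S assume "f \<in> Cle n"
  then show "f S = (\<Sum>T\<in>Pn n. (\<Sum>U\<in>Pn n. f U * of_nat (pbinom U T) * a ^ (deg U - deg T))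
                       * ppow (xminus a) T S)"
    by (rule Cle_expansion)
qed

end
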